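(* Let $m>0$, let $k$ be a nonzero integer and $\lambda\le 0$. Let $\gamma$ be the maximal solution of the initial value problem $$\gamma'(r)+\gamma(r)^2=-\frac{1}{4r^2}+\frac{k^2}{r^2}-\frac{m}{r^3}\Big(1+\frac{m}{2r}\Big)^{-2}-\lambda\Big(1+\frac{m}{2r}\Big)^4,\qquad \gamma(m/2)=m^{-1}.$$ Then $\gamma$ is defined and finite on all of $[m/2,\infty)$; in particular, for no $R>m/2$ does one have $\lim_{r\to R^-}\gamma(r)=-\infty$. Equivalently, for every $R>m/2$ there is no nonzero solution $v$ of $v''+v\big(\frac{1}{4r^2}-\frac{k^2}{r^2}+\frac{m}{r^3}(1+\frac{m}{2r})^{-2}+\lambda(1+\frac{m}{2r})^4\big)=0$ on $[m/2,R]$ with $v'(m/2)=m^{-1}v(m/2)$ and $v(R)=0$. *)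

theory Defs
  imports "HOL-Analysis.Analysis"
begin

text \<open>The potential
  Q(r) = 1/(4 r^2) - k^2/r^2 + (m/r^3) (1 + m/(2r))^(-2) + lambda (1 + m/(2r))^4,
  so that the Riccati equation reads  gamma' + gamma^2 = - Q  and the
  Jacobi equation reads  v'' + v Q = 0.\<close>
definition potQ :: "real \<Rightarrow> int \<Rightarrow> real \<Rightarrow> real \<Rightarrow> real" where
  "potQ m k lam r =
     1 / (4 * r^2) - (real_of_int k)^2 / r^2
     + m / r^3 * inverse ((1 + m / (2 * r))^2)
     + lam * (1 + m / (2 * r))^4"

end

theory Submission
  imports Defs
begin

text \<open>Writing \<open>\<gamma> = v'/v\<close> turns the Riccati equation into the Jacobi equation
  \<open>v'' + Q v = 0\<close>, \<open>v(m/2) = 1\<close>, \<open>v'(m/2) = 1/m\<close>. For \<open>k \<noteq> 0\<close> and \<open>\<lambda> \<le> 0\<close> the potential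
  \<open>Q\<close> is negative, so \<open>(v v')' = v'\<^sup>2 - Q v\<^sup>2 \<ge> 0\<close>: the product \<open>v v'\<close> is nondecreasing.
  It starts at \<open>1/m > 0\<close>, hence \<open>v\<close> never vanishes and \<open>\<gamma>\<close> exists on all of \<open>[m/2, \<infinity>)\<close>.
  Likewise, a solution with \<open>v'(m/2) = v(m/2)/m\<close> and \<open>v(R) = 0\<close> has \<open>v v' \<ge> 0\<close> at \<open>m/2\<close>
  and \<open>v v' = 0\<close> at \<open>R\<close>, so \<open>(v\<^sup>2)' = 2 v v'\<close> vanishes on \<open>[m/2, R]\<close> and \<open>v = 0\<close>.
  The Jacobi equation itself is solved by the Neumann series of its Picard iteration.\<close>

lemma mass_term_le:
  fixes m r :: real
  assumes "m > 0" "r > 0"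
  shows "m / r^3 * inverse ((1 + m / (2 * r))^2) \<le> 1 / (2 * r^2)"
proof -
  have "(2 * r + m)^2 = (2 * r - m)^2 + 8 * m * r" by algebra
  then have amgm: "8 * m * r \<le> (2 * r + m)^2" using zero_le_power2[of "2 * r - m"] by linarith
  have "m / r^3 * inverse ((1 + m / (2 * r))^2) = 4 * m / (r * (2 * r + m)^2)"
    using assms by (simp add: field_simps power2_eq_square power3_eq_cube)
  also have "\<dots> \<le> 1 / (2 * r^2)"
    using assms amgm by (simp add: divide_simps power2_eq_square)
  finally show ?thesis .
qed

lemma potQ_neg:
  fixes m lam r :: real and k :: int
  assumes "m > 0" "k \<noteq> 0" "lam \<le> 0" "r > 0"
  shows "potQ m k lam r < 0"
proof -
  have "1 \<le> \<bar>real_of_int k\<bar>" using assms(2) by linarith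
  then have "1 \<le> (real_of_int k)^2" by (metis one_le_power power2_abs)
  then have angular: "1 / r^2 \<le> (real_of_int k)^2 / r^2" by (simp add: divide_right_mono)
  have "lam * (1 + m / (2 * r))^4 \<le> 0" using assms by (simp add: mult_nonpos_nonneg)
  then have "potQ m k lam r \<le> 1 / (4 * r^2) - 1 / r^2 + 1 / (2 * r^2)"
    unfolding potQ_def using angular mass_term_le[OF assms(1,4)] by linarith
  also have "\<dots> < 0" using assms by (simp add: field_simps)
  finally show ?thesis .
qed

lemma continuous_on_potQ:
  assumes "m > 0"
  shows "continuous_on {m / 2..} (potQ m k lam)"
proof -
  have pos: "0 < r \<and> 0 < m / (2 * r)" if "r \<in> {m / 2..}" for r
    using assms that by auto
  show ?thesis
    unfolding potQ_def[abs_def] by (intro continuous_intros) (auto dest!: pos)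
qed

lemma integral_power_bound:
  fixes g :: "real \<Rightarrow> real"
  assumes "continuous_on {a..r} g" "a \<le> r" "\<And>s. s \<in> {a..r} \<Longrightarrow> \<bar>g s\<bar> \<le> D * (s - a)^n"
  shows "\<bar>integral {a..r} g\<bar> \<le> D * (r - a)^Suc n / Suc n"
proof -
  have "((\<lambda>s. D * (s - a)^Suc n / Suc n) has_real_derivative D * (Suc n * (s - a)^n * 1) / Suc n)
          (at s within {a..r})" for s
    by (intro derivative_eq_intros DERIV_power_Suc) auto
  then have bound_integral: "((\<lambda>s. D * (s - a)^n) has_integral D * (r - a)^Suc n / Suc n) {a..r}"
    using fundamental_theorem_of_calculus[OF assms(2), of "\<lambda>s. D * (s - a)^Suc n / Suc n"]
    by (simp del: of_nat_Suc add: has_real_derivative_iff_has_vector_derivative)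
  have "norm (integral {a..r} g) \<le> integral {a..r} (\<lambda>s. D * (s - a)^n)"
    using assms bound_integral
    by (intro integral_norm_bound_integral integrable_continuous_real) (auto simp: has_integral_integrable intro!: continuous_intros)
  then show ?thesis using integral_unique[OF bound_integral] by simp
qed

text \<open>The terms of the Neumann series for \<open>v' = w\<close>, \<open>w' = - v q\<close>, \<open>(v, w)(a) = (y0, y1)\<close>;
  their partial sums are the Picard iterates.\<close>

fun picard_term :: "(real \<Rightarrow> real) \<Rightarrow> real \<Rightarrow> real \<Rightarrow> real \<Rightarrow> nat \<Rightarrow> (real \<Rightarrow> real) \<times> (real \<Rightarrow> real)"
  where
    "picard_term q a y0 y1 0 = (\<lambda>_. y0, \<lambda>_. y1)"
  | "picard_term q a y0 y1 (Suc n) =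
      (\<lambda>r. integral {a..r} (snd (picard_term q a y0 y1 n)),
       \<lambda>r. - integral {a..r} (\<lambda>s. fst (picard_term q a y0 y1 n) s * q s))"

lemma continuous_on_picard_term:
  assumes "continuous_on {a..b} q"
  shows "continuous_on {a..b} (fst (picard_term q a y0 y1 n))"
    and "continuous_on {a..b} (snd (picard_term q a y0 y1 n))"
proof (induction n)
  case (Suc n)
  have "continuous_on {a..b} (\<lambda>s. fst (picard_term q a y0 y1 n) s * q s)"
    using Suc assms by (intro continuous_intros)
  from DERIV_continuous_on[OF integral_has_real_derivative[OF this]]
    DERIV_continuous_on[OF integral_has_real_derivative[OF Suc(2)]]
  show "continuous_on {a..b} (fst (picard_term q a y0 y1 (Suc n)))"
    and "continuous_on {a..b} (snd (picard_term q a y0 y1 (Suc n)))"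
    by (auto intro: continuous_intros)
qed simp_all

lemma picard_term_Suc_has_derivative:
  assumes "continuous_on {a..b} q" "r \<in> {a..b}"
  shows "(fst (picard_term q a y0 y1 (Suc n)) has_real_derivative snd (picard_term q a y0 y1 n) r)
           (at r within {a..b})"
    and "(snd (picard_term q a y0 y1 (Suc n)) has_real_derivative - fst (picard_term q a y0 y1 n) r * q r)
           (at r within {a..b})"
proof -
  note cont = continuous_on_picard_term[OF assms(1), of y0 y1 n]
  show "(fst (picard_term q a y0 y1 (Suc n)) has_real_derivative snd (picard_term q a y0 y1 n) r)
          (at r within {a..b})"
    using integral_has_real_derivative[OF cont(2) assms(2)] by simp
  have "continuous_on {a..b} (\<lambda>s. fst (picard_term q a y0 y1 n) s * q s)"
    using cont assms by (intro continuous_intros)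
  from DERIV_minus[OF integral_has_real_derivative[OF this assms(2)]]
  show "(snd (picard_term q a y0 y1 (Suc n)) has_real_derivative - fst (picard_term q a y0 y1 n) r * q r)
          (at r within {a..b})"
    by simp
qed

lemma picard_term_bound:
  assumes "continuous_on {a..b} q" "\<And>s. s \<in> {a..b} \<Longrightarrow> \<bar>q s\<bar> \<le> K" "K \<ge> 1"
    and "\<bar>y0\<bar> \<le> C" "\<bar>y1\<bar> \<le> C"
  shows "r \<in> {a..b} \<Longrightarrow> \<bar>fst (picard_term q a y0 y1 n) r\<bar> \<le> C * K^n * (r - a)^n / fact n
    \<and> \<bar>snd (picard_term q a y0 y1 n) r\<bar> \<le> C * K^n * (r - a)^n / fact n"
proof (induction n arbitrary: r)
  case (Suc n)
  note cont = continuous_on_picard_term[OF assms(1), of y0 y1 n]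
  from Suc.prems have sub: "{a..r} \<subseteq> {a..b}" and "a \<le> r" by auto
  have "C \<ge> 0" using assms(4) by linarith
  have "\<bar>fst (picard_term q a y0 y1 (Suc n)) r\<bar> \<le> C * K^n / fact n * (r - a)^Suc n / Suc n"
    using conjunct2[OF Suc.IH] sub \<open>a \<le> r\<close>
    by (simp only: picard_term.simps fst_conv, intro integral_power_bound continuous_on_subset[OF cont(2)]) auto
  also have "\<dots> = C * K^n * (r - a)^Suc n / fact (Suc n)"
    by (simp add: fact_Suc)
  also have "\<dots> \<le> C * K^Suc n * (r - a)^Suc n / fact (Suc n)"
    using power_increasing[of n "Suc n" K] assms(3) \<open>C \<ge> 0\<close> \<open>a \<le> r\<close>
    by (intro divide_right_mono mult_right_mono mult_left_mono) auto
  finally have fst_bound: "\<bar>fst (picard_term q a y0 y1 (Suc n)) r\<bar> \<le> C * K^Suc n * (r - a)^Suc n / fact (Suc n)" .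
  have "\<bar>fst (picard_term q a y0 y1 n) s * q s\<bar> \<le> K * C * K^n / fact n * (s - a)^n" if "s \<in> {a..r}" for s
  proof -
    have "\<bar>fst (picard_term q a y0 y1 n) s * q s\<bar> \<le> C * K^n * (s - a)^n / fact n * K"
      unfolding abs_mult using conjunct1[OF Suc.IH[of s]] assms(2)[of s] that sub
      by (intro mult_mono) auto
    also have "\<dots> = K * C * K^n / fact n * (s - a)^n" by (simp add: ac_simps)
    finally show ?thesis .
  qed
  moreover have "continuous_on {a..r} (\<lambda>s. fst (picard_term q a y0 y1 n) s * q s)"
    using continuous_on_subset[OF cont(1) sub] continuous_on_subset[OF assms(1) sub]
    by (intro continuous_intros)
  ultimately have "\<bar>snd (picard_term q a y0 y1 (Suc n)) r\<bar> \<le> K * C * K^n / fact n * (r - a)^Suc n / Suc n"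
    using \<open>a \<le> r\<close> by (simp only: picard_term.simps snd_conv abs_minus_cancel, intro integral_power_bound) auto
  also have "\<dots> = C * K^Suc n * (r - a)^Suc n / fact (Suc n)"
    by (simp add: fact_Suc ac_simps)
  finally show ?case using fst_bound by simp
qed (use assms in simp_all)

lemma picard_term_dominated:
  assumes "continuous_on {a..b} q" "\<And>s. s \<in> {a..b} \<Longrightarrow> \<bar>q s\<bar> \<le> K" "K \<ge> 1"
  obtains M where "summable M"
    and "\<And>n s. s \<in> {a..b} \<Longrightarrow>
      \<bar>fst (picard_term q a y0 y1 n) s\<bar> \<le> M n \<and> \<bar>snd (picard_term q a y0 y1 n) s\<bar> \<le> M n"
proof
  define C where "C = max \<bar>y0\<bar> \<bar>y1\<bar>"
  have "summable (\<lambda>n. C * ((K * (b - a))^n / fact n))"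
    using summable_exp[of "K * (b - a)"] by (intro summable_mult) (simp add: field_simps)
  then show "summable (\<lambda>n. C * (K * (b - a))^n / fact n)" by simp
  fix n s assume s: "s \<in> {a..b}"
  have "C * K^n * (s - a)^n / fact n \<le> C * K^n * (b - a)^n / fact n"
    using s assms(3) by (intro divide_right_mono mult_left_mono power_mono) (auto simp: C_def)
  then show "\<bar>fst (picard_term q a y0 y1 n) s\<bar> \<le> C * (K * (b - a))^n / fact n
      \<and> \<bar>snd (picard_term q a y0 y1 n) s\<bar> \<le> C * (K * (b - a))^n / fact n"
    using picard_term_bound[OF assms, of y0 C y1 s n] s by (auto simp: C_def power_mult_distrib)
qed

lemma has_real_derivative_suminf:
  fixes f f' :: "nat \<Rightarrow> real \<Rightarrow> real"
  assumes "convex S" "x \<in> S"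
    and deriv: "\<And>n x. x \<in> S \<Longrightarrow> (f n has_real_derivative f' n x) (at x within S)"
    and bound: "\<And>n x. x \<in> S \<Longrightarrow> \<bar>f n x\<bar> \<le> M n" "summable M"
    and bound': "\<And>n x. x \<in> S \<Longrightarrow> \<bar>f' n x\<bar> \<le> M' n" "summable M'"
  shows "((\<lambda>x. \<Sum>n. f n x) has_real_derivative (\<Sum>n. f' n x)) (at x within S)"
proof -
  have "uniform_limit S (\<lambda>n x. \<Sum>i<n. f' i x) (\<lambda>x. \<Sum>i. f' i x) sequentially"
    using bound' by (intro Weierstrass_m_test[of S _ M']) auto
  moreover have "summable (\<lambda>n. f n x)"
    using bound \<open>x \<in> S\<close> by (auto intro: summable_comparison_test'[of M])
  ultimately obtain g where
    g: "\<And>y. y \<in> S \<Longrightarrow> (\<lambda>n. f n y) sums g y \<and> (g has_real_derivative (\<Sum>n. f' n y)) (at y within S)"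
    using has_field_derivative_series[of S f f', OF \<open>convex S\<close> deriv _ \<open>x \<in> S\<close>] by blast
  have "(\<Sum>n. f n y) = g y" if "y \<in> S" for y
    using g[OF that] by (simp add: sums_iff)
  with g[OF \<open>x \<in> S\<close>] \<open>x \<in> S\<close> show ?thesis
    unfolding has_field_derivative_def by (metis has_derivative_transform)
qed

lemma linear_ode_solution_Icc:
  fixes q :: "real \<Rightarrow> real" and a b y y' r :: real
  defines "v \<equiv> \<lambda>r. y + (\<Sum>n. fst (picard_term q a y y' (Suc n)) r)"
    and "w \<equiv> \<lambda>r. y' + (\<Sum>n. snd (picard_term q a y y' (Suc n)) r)"
  assumes q: "continuous_on {a..b} q" and r: "r \<in> {a..b}"
  shows "(v has_real_derivative w r) (at r within {a..b})"
    and "(w has_real_derivative - v r * q r) (at r within {a..b})"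
proof -
  define u where "u n = fst (picard_term q a y y' n)" for n
  define z where "z n = snd (picard_term q a y y' n)" for n
  obtain K0 where K0: "\<And>s. s \<in> {a..b} \<Longrightarrow> \<bar>q s\<bar> \<le> K0"
    using compact_imp_bounded[OF compact_continuous_image[OF q compact_Icc]]
    unfolding bounded_iff real_norm_def by fastforce
  define K where "K = max 1 K0"
  have K: "K \<ge> 1" "\<And>s. s \<in> {a..b} \<Longrightarrow> \<bar>q s\<bar> \<le> K"
    using K0 by (auto simp: K_def le_max_iff_disj)
  obtain M where M: "summable M" and bound: "\<And>n s. s \<in> {a..b} \<Longrightarrow> \<bar>u n s\<bar> \<le> M n \<and> \<bar>z n s\<bar> \<le> M n"
    using picard_term_dominated[OF q K(2,1)] unfolding u_def z_def by blast
  have M_nonneg: "0 \<le> M n" for n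
    using bound[OF r, of n] by linarith
  have summable_u: "summable (\<lambda>n. u n r)" and summable_z: "summable (\<lambda>n. z n r)"
    using bound[OF r] by (auto intro: summable_comparison_test'[OF M])
  have "((\<lambda>s. \<Sum>n. u (Suc n) s) has_real_derivative (\<Sum>n. z n r)) (at r within {a..b})"
    using bound M picard_term_Suc_has_derivative(1)[OF q] r
    by (intro has_real_derivative_suminf[where M="\<lambda>n. M (Suc n)" and M'=M])
       (auto simp: u_def z_def summable_Suc_iff simp del: picard_term.simps)
  moreover have "(\<Sum>n. z n r) = w r"
    using suminf_split_head[OF summable_z] by (simp add: w_def z_def)
  ultimately show "(v has_real_derivative w r) (at r within {a..b})"
    unfolding v_def u_def using DERIV_add[OF DERIV_const[of y]] by fastforce
  have "((\<lambda>s. \<Sum>n. z (Suc n) s) has_real_derivative (\<Sum>n. - u n r * q r)) (at r within {a..b})"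
    using bound K M M_nonneg picard_term_Suc_has_derivative(2)[OF q] r
    by (intro has_real_derivative_suminf[where M="\<lambda>n. M (Suc n)" and M'="\<lambda>n. M n * K"])
       (auto simp: u_def z_def summable_Suc_iff abs_mult intro!: mult_mono summable_mult2
          simp del: picard_term.simps)
  moreover have "(\<Sum>n. - u n r * q r) = - (\<Sum>n. u n r) * q r"
    using summable_mult2[OF summable_u] suminf_mult2[OF summable_u] by (simp add: suminf_minus)
  moreover have "(\<Sum>n. u n r) = v r"
    using suminf_split_head[OF summable_u] by (simp add: v_def u_def)
  ultimately show "(w has_real_derivative - v r * q r) (at r within {a..b})"
    unfolding w_def z_def using DERIV_add[OF DERIV_const[of y']] by fastforce
qed

lemma linear_ode_solution_Ici:
  fixes q :: "real \<Rightarrow> real"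
  assumes q: "continuous_on {a..} q"
  obtains v w where "v a = y0" "w a = y1"
    and "\<And>r. r \<in> {a..} \<Longrightarrow> (v has_real_derivative w r) (at r within {a..})"
    and "\<And>r. r \<in> {a..} \<Longrightarrow> (w has_real_derivative - v r * q r) (at r within {a..})"
proof -
  define v where "v r = y0 + (\<Sum>n. fst (picard_term q a y0 y1 (Suc n)) r)" for r
  define w where "w r = y1 + (\<Sum>n. snd (picard_term q a y0 y1 (Suc n)) r)" for r
  have deriv: "(v has_real_derivative w r) (at r within {a..})
      \<and> (w has_real_derivative - v r * q r) (at r within {a..})" if r: "r \<in> {a..}" for r
  proof -
    have at_eq: "at r within {a..r + 1} = at r within {a..}"
      using r by (intro at_within_nhd[where S="{..<r + 1}"]) auto
    have q': "continuous_on {a..r + 1} q"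
      using q by (rule continuous_on_subset) auto
    have r': "r \<in> {a..r + 1}" using r by simp
    show ?thesis
      using linear_ode_solution_Icc[where y=y0 and y'=y1, OF q' r', unfolded at_eq]
      by (simp add: v_def[abs_def] w_def[abs_def])
  qed
  show ?thesis
  proof (rule that)
    show "v a = y0" "w a = y1" by (simp_all add: v_def w_def)
  qed (use deriv in blast)+
qed

lemma DERIV_within_nonneg_imp_increasing:
  fixes f f' :: "real \<Rightarrow> real"
  assumes "\<And>x. x \<in> {a..b} \<Longrightarrow> (f has_real_derivative f' x) (at x within {a..b})"
    and "\<And>x. x \<in> {a..b} \<Longrightarrow> f' x \<ge> 0" and "a \<le> x" "x \<le> y" "y \<le> b"
  shows "f x \<le> f y"
proof (rule DERIV_nonneg_imp_increasing_open[OF \<open>x \<le> y\<close>])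
  fix z assume z: "x < z" "z < y"
  then have "at z within {a..b} = at z"
    using assms by (intro at_within_Icc_at) auto
  then show "\<exists>d. (f has_real_derivative d) (at z) \<and> 0 \<le> d"
    using assms(1,2)[of z] z assms(3-5) by auto
next
  show "continuous_on {x..y} f"
    using DERIV_continuous_on[OF assms(1)] by (rule continuous_on_subset) (use assms in auto)
qed

lemma jacobi_product_increasing:
  fixes v v' q :: "real \<Rightarrow> real"
  assumes "\<And>r. r \<in> {a..b} \<Longrightarrow> (v has_real_derivative v' r) (at r within {a..b})"
    and "\<And>r. r \<in> {a..b} \<Longrightarrow> (v' has_real_derivative - v r * q r) (at r within {a..b})"
    and "\<And>r. r \<in> {a..b} \<Longrightarrow> q r \<le> 0"
    and "a \<le> x" "x \<le> y" "y \<le> b"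
  shows "v x * v' x \<le> v y * v' y"
proof (rule DERIV_within_nonneg_imp_increasing[where f="\<lambda>r. v r * v' r"])
  fix r assume r: "r \<in> {a..b}"
  show "((\<lambda>r. v r * v' r) has_real_derivative v r * (- v r * q r) + v' r * v' r) (at r within {a..b})"
    using assms(1,2)[OF r] by (rule DERIV_mult')
  have "0 \<le> (- q r) * (v r * v r)"
    using assms(3)[OF r] by (simp add: mult_nonpos_nonneg)
  moreover have "v r * (- v r * q r) = (- q r) * (v r * v r)"
    by (simp add: algebra_simps)
  ultimately show "0 \<le> v r * (- v r * q r) + v' r * v' r"
    using zero_le_square[of "v' r"] by linarith
qed (use assms in auto)

lemma jacobi_solution_vanishes:
  fixes v v' q :: "real \<Rightarrow> real"
  assumes deriv: "\<And>r. r \<in> {a..b} \<Longrightarrow> (v has_real_derivative v' r) (at r within {a..b})"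
    and deriv': "\<And>r. r \<in> {a..b} \<Longrightarrow> (v' has_real_derivative - v r * q r) (at r within {a..b})"
    and "\<And>r. r \<in> {a..b} \<Longrightarrow> q r \<le> 0"
    and "0 \<le> v a * v' a" and "v b = 0" and r: "r \<in> {a..b}"
  shows "v r = 0"
proof -
  note increasing = jacobi_product_increasing[OF deriv deriv' \<open>\<And>r. r \<in> {a..b} \<Longrightarrow> q r \<le> 0\<close>]
  have product_zero: "v s * v' s = 0" if s: "s \<in> {a..b}" for s
  proof -
    have "v a * v' a \<le> v s * v' s" by (rule increasing) (use s in auto)
    moreover have "v s * v' s \<le> v b * v' b" by (rule increasing) (use s in auto)
    moreover have "v b * v' b = 0" using \<open>v b = 0\<close> by simp
    ultimately show ?thesis using \<open>0 \<le> v a * v' a\<close> by linarith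
  qed
  have "((\<lambda>s. v s * v s) has_real_derivative 0) (at s within {a..b})" if "s \<in> {a..b}" for s
    using DERIV_mult'[OF deriv[OF that] deriv[OF that]] product_zero[OF that]
    by (simp add: mult.commute)
  from has_field_derivative_zero_constant[OF convex_real_interval(5) this]
  obtain c where "\<And>s. s \<in> {a..b} \<Longrightarrow> v s * v s = c" by blast
  moreover have "b \<in> {a..b}" using r by simp
  ultimately have "v r * v r = v b * v b" using r by metis
  then show ?thesis using \<open>v b = 0\<close> by simp
qed

lemma riccati_solution_Ici:
  fixes q :: "real \<Rightarrow> real"
  assumes "continuous_on {a..} q" and "\<And>r. r \<in> {a..} \<Longrightarrow> q r \<le> 0" and "g0 > 0"
  obtains \<gamma> where "\<gamma> a = g0"
    and "\<And>r. r \<in> {a..} \<Longrightarrow> (\<gamma> has_real_derivative - ((\<gamma> r)^2) - q r) (at r within {a..})"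
proof -
  obtain v w where init: "v a = 1" "w a = g0"
    and deriv: "\<And>r. r \<in> {a..} \<Longrightarrow> (v has_real_derivative w r) (at r within {a..})"
    and deriv': "\<And>r. r \<in> {a..} \<Longrightarrow> (w has_real_derivative - v r * q r) (at r within {a..})"
    using linear_ode_solution_Ici[OF assms(1)] by blast
  have v_nonzero: "v r \<noteq> 0" if r: "r \<in> {a..}" for r
  proof -
    have sub: "{a..r} \<subseteq> {a..}" by auto
    have "v a * w a \<le> v r * w r"
    proof (rule jacobi_product_increasing[of a r v w q])
      fix s assume "s \<in> {a..r}"
      then have s: "s \<in> {a..}" by simp
      show "(v has_real_derivative w s) (at s within {a..r})"
        using DERIV_subset[OF deriv[OF s] sub] .
      show "(w has_real_derivative - v s * q s) (at s within {a..r})"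
        using DERIV_subset[OF deriv'[OF s] sub] .
      show "q s \<le> 0" using assms(2)[OF s] .
    qed (use r in auto)
    then show ?thesis using init \<open>g0 > 0\<close> by auto
  qed
  show ?thesis
  proof
    show "w a / v a = g0" using init by simp
  next
    fix r assume r: "r \<in> {a..}"
    have "((\<lambda>r. w r / v r) has_real_derivative ((- v r * q r) * v r - w r * w r) / (v r * v r)) (at r within {a..})"
      using deriv'[OF r] deriv[OF r] v_nonzero[OF r] by (rule DERIV_divide)
    moreover have "((- v r * q r) * v r - w r * w r) / (v r * v r) = - ((w r / v r)^2) - q r"
      using v_nonzero[OF r] by (simp add: field_simps power2_eq_square)
    ultimately show "((\<lambda>r. w r / v r) has_real_derivative - ((w r / v r)^2) - q r) (at r within {a..})"
      by simp
  qed
qed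

theorem mainTheorem4:
  fixes m lam :: real and k :: int
  assumes "m > 0" and "k \<noteq> 0" and "lam \<le> 0"
  shows "(\<exists>\<gamma> :: real \<Rightarrow> real.
            \<gamma> (m / 2) = 1 / m \<and>
            (\<forall>r \<in> {m / 2 ..}.
               (\<gamma> has_real_derivative (- ((\<gamma> r)^2) - potQ m k lam r)) (at r within {m / 2 ..})))
       \<and> (\<forall>R > m / 2. \<forall>(v :: real \<Rightarrow> real) (v' :: real \<Rightarrow> real).
            (\<forall>r \<in> {m / 2 .. R}.
               (v has_real_derivative v' r) (at r within {m / 2 .. R}) \<and>
               (v' has_real_derivative (- v r * potQ m k lam r)) (at r within {m / 2 .. R})) \<and>
            v' (m / 2) = v (m / 2) / m \<and> v R = 0
            \<longrightarrow> (\<forall>r \<in> {m / 2 .. R}. v r = 0))"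
proof (intro conjI allI impI ballI)
  have Q_nonpos: "potQ m k lam r \<le> 0" if "r \<in> {m / 2..}" for r
    using potQ_neg[OF assms] that \<open>m > 0\<close> by (simp add: less_imp_le)
  obtain \<gamma> where "\<gamma> (m / 2) = 1 / m"
    and "\<And>r. r \<in> {m / 2..} \<Longrightarrow> (\<gamma> has_real_derivative - ((\<gamma> r)^2) - potQ m k lam r) (at r within {m / 2..})"
    using riccati_solution_Ici[OF continuous_on_potQ[OF \<open>m > 0\<close>] Q_nonpos, of "1 / m"] \<open>m > 0\<close> by auto
  then show "\<exists>\<gamma>. \<gamma> (m / 2) = 1 / m \<and>
      (\<forall>r \<in> {m / 2 ..}. (\<gamma> has_real_derivative (- ((\<gamma> r)^2) - potQ m k lam r)) (at r within {m / 2 ..}))"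
    by blast
  fix R v v' r
  assume "r \<in> {m / 2..R}" and jacobi: "(\<forall>r \<in> {m / 2 .. R}.
      (v has_real_derivative v' r) (at r within {m / 2 .. R}) \<and>
      (v' has_real_derivative (- v r * potQ m k lam r)) (at r within {m / 2 .. R})) \<and>
    v' (m / 2) = v (m / 2) / m \<and> v R = 0"
  show "v r = 0"
  proof (rule jacobi_solution_vanishes[of "m / 2" R v v' "potQ m k lam"])
    show "0 \<le> v (m / 2) * v' (m / 2)"
      using jacobi \<open>m > 0\<close> by simp
    show "potQ m k lam s \<le> 0" if "s \<in> {m / 2..R}" for s
      using Q_nonpos that by simp
  qed (use jacobi \<open>r \<in> {m / 2..R}\<close> in blast)+
qed

end
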